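(* Let $f$ be as in the setting below and satisfy condition (i); fix $m\in\mathbb N$, $\bar p\in[0,1]^{g_f^m}$, $\epsilon>0$ and $0<s\le1$. Suppose there are a strictly increasing sequence $(M_k)_{k=1}^\infty$ of natural numbers and $0\le c<1$ such that \[ N^s_\infty\big([0,1)\cap G^{f,m}_{\bar p}(M_k,\epsilon)\big)<\frac{c}{K_f^s}\quad\text{for all }k. \] Then for each cylinder $C\subset[0,1)$ of $f$ there is $K_C$ such that $N^s_\infty\big(C\cap G^{f,m}_{\bar p}(M_k,\epsilon/2)\big)<c|C|^s$ for all $k>K_C$.
   Context: Setting: $f\colon[0,1)\to[0,1)$ and $g_f\ge 2$ is an integer such that $[0,1)$ is partitioned into $g_f$ half-open intervals $[a,b)$, enumerated as $[0],\dots,[g_f-1]$, such that on each of them $f$ is monotone and maps onto $[0,1)$, and $|f(x)-f(y)|\ge |x-y|$ for all $x,y$ in the same interval. For a word $x_1\dots x_n$ over $\{0,\dots,g_f-1\}$ the generation-$n$ cylinder is $C_{x_1\dots x_n}=\{x\in[0,1): f^{i-1}(x)\in[x_i],\ i=1,\dots,n\}$; $[0,1)$ is the generation-$0$ cylinder. It is assumed that $|C_{x_1\dots x_n}|\to 0$ as $n\to\infty$ for every $(x_i)\in\{0,\dots,g_f-1\}^{\mathbb N}$, so each $x\in[0,1)$ has a unique coding sequence $(x_i)_{i\ge1}$ (its $f$-expansion). Condition (i) (bounded distortion): there is $K_f>0$ such that for every cylinder $C_{x_1\dots x_n}$ (including $[0,1)$), $|(f^n)'(y)|/|(f^n)'(z)|<K_f$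 for all $y,z\in C_{x_1\dots x_n}$. Frequencies: enumerate the words of length $m$ as $w_1,\dots,w_{g_f^m}$; for $n>m$, $\tau^f_w(x,n)=\#\{i\in\{1,\dots,n-m\}: x_i\dots x_{i+m-1}=w\}$, and $G^{f,m}_{\bar p}(n,\epsilon)=\{x\in[0,1): p_{w_j}-\epsilon<\tau^f_{w_j}(x,n)/(n-m)<p_{w_j}+\epsilon\ \forall j\}$ (a union of generation-$n$ cylinders). $N^s_\infty(F)=\inf\{\sum_i |C_i|^s: F\subset\bigcup_i C_i\}$, the infimum over countable covers by cylinders of $f$. *)

theory Defs
  imports "HOL-Analysis.Analysis"
begin

text \<open>The partition intervals are [i] = {a i ..< b i}, for i < g.
  Words over {0,...,g-1} are lists of naturals whose entries are < g.\<close>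

definition word :: "nat \<Rightarrow> nat list \<Rightarrow> bool" where
  "word g w \<longleftrightarrow> (\<forall>i\<in>set w. i < g)"

definition cyl :: "(real \<Rightarrow> real) \<Rightarrow> (nat \<Rightarrow> real) \<Rightarrow> (nat \<Rightarrow> real) \<Rightarrow> nat list \<Rightarrow> real set" where
  "cyl f a b w = {x \<in> {0..<1}. \<forall>i<length w. (f ^^ i) x \<in> {a (w ! i)..<b (w ! i)}}"

text \<open>Length of a cylinder (cylinders are intervals).\<close>
definition clen :: "real set \<Rightarrow> real" where
  "clen C = diameter C"

definition fexp_setting :: "(real \<Rightarrow> real) \<Rightarrow> nat \<Rightarrow> (nat \<Rightarrow> real) \<Rightarrow> (nat \<Rightarrow> real) \<Rightarrow> bool" where
  "fexp_setting f g a b \<longleftrightarrow>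
     g \<ge> 2 \<and>
     f ` {0..<1} \<subseteq> {0..<1} \<and>
     (\<forall>i<g. a i < b i) \<and>
     (\<forall>i<g. \<forall>j<g. i \<noteq> j \<longrightarrow> {a i..<b i} \<inter> {a j..<b j} = {}) \<and>
     (\<Union>i<g. {a i..<b i}) = {0..<1} \<and>
     (\<forall>i<g. mono_on {a i..<b i} f \<or> antimono_on {a i..<b i} f) \<and>
     (\<forall>i<g. f ` {a i..<b i} = {0..<1}) \<and>
     (\<forall>i<g. \<forall>x\<in>{a i..<b i}. \<forall>y\<in>{a i..<b i}. \<bar>f x - f y\<bar> \<ge> \<bar>x - y\<bar>) \<and>
     (\<forall>xs :: nat \<Rightarrow> nat. (\<forall>i. xs i < g) \<longrightarrow>
        (\<lambda>n. clen (cyl f a b (map xs [0..<n]))) \<longlonglongrightarrow> 0)"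

definition bounded_distortion :: "(real \<Rightarrow> real) \<Rightarrow> nat \<Rightarrow> (nat \<Rightarrow> real) \<Rightarrow> (nat \<Rightarrow> real) \<Rightarrow> real \<Rightarrow> bool" where
  "bounded_distortion f g a b K \<longleftrightarrow> K > 0 \<and>
     (\<forall>w. word g w \<longrightarrow>
        (\<exists>D :: real \<Rightarrow> real.
           (\<forall>y\<in>cyl f a b w. ((f ^^ length w) has_real_derivative D y) (at y within cyl f a b w)) \<and>
           (\<forall>y\<in>cyl f a b w. \<forall>z\<in>cyl f a b w. \<bar>D y\<bar> / \<bar>D z\<bar> < K)))"

text \<open>The i-th digit (0-indexed) of the f-expansion of x: x_{i+1} in the paper.\<close>
definition digit :: "(real \<Rightarrow> real) \<Rightarrow> nat \<Rightarrow> (nat \<Rightarrow> real) \<Rightarrow> (nat \<Rightarrow> real) \<Rightarrow> real \<Rightarrow> nat \<Rightarrow> nat" where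
  "digit f g a b x i = (THE j. j < g \<and> (f ^^ i) x \<in> {a j..<b j})"

definition tau :: "(real \<Rightarrow> real) \<Rightarrow> nat \<Rightarrow> (nat \<Rightarrow> real) \<Rightarrow> (nat \<Rightarrow> real) \<Rightarrow> nat list \<Rightarrow> real \<Rightarrow> nat \<Rightarrow> nat" where
  "tau f g a b w x n =
     card {i. i < n - length w \<and> map (\<lambda>k. digit f g a b x (i + k)) [0..<length w] = w}"

definition Gset :: "(real \<Rightarrow> real) \<Rightarrow> nat \<Rightarrow> (nat \<Rightarrow> real) \<Rightarrow> (nat \<Rightarrow> real) \<Rightarrow> nat \<Rightarrow> (nat list \<Rightarrow> real) \<Rightarrow> nat \<Rightarrow> real \<Rightarrow> real set" where
  "Gset f g a b m p n eps = {x \<in> {0..<1}. \<forall>w. word g w \<and> length w = m \<longrightarrow>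
      p w - eps < real (tau f g a b w x n) / real (n - m) \<and>
      real (tau f g a b w x n) / real (n - m) < p w + eps}"

text \<open>A countable family of cylinders is given by a set of words (every set of words is countable;
  distinct words give distinct cylinders).\<close>
definition Ninf :: "(real \<Rightarrow> real) \<Rightarrow> nat \<Rightarrow> (nat \<Rightarrow> real) \<Rightarrow> (nat \<Rightarrow> real) \<Rightarrow> real \<Rightarrow> real set \<Rightarrow> ennreal" where
  "Ninf f g a b s F = (INF W \<in> {W. (\<forall>w\<in>W. word g w) \<and> F \<subseteq> (\<Union>w\<in>W. cyl f a b w)}.
      infsum (\<lambda>w. ennreal (clen (cyl f a b w) powr s)) W)"

end

theory Submission
  imports Defs
begin

(* Fix a cylinder C_w of generation n = |w| and write h = f^n.  The proof has four parts.
   1. Cylinder algebra: C_{wv} = {x \<in> C_w. h x \<in> C_v}; each C_w is an interval which h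
      maps onto [0,1), and h does not contract distances on C_w.
   2. Distortion: by the mean value theorem and condition (i), 1 \<le> K |C_w| |h'(\<xi>)| at
      every point with h'(\<xi>) \<noteq> 0, whence |C_{wv}| \<le> K |C_w| |C_v|.
   3. Pulling back covers: prefixing w to a cylinder cover of F gives a cover of
      S = {x \<in> C_w. h x \<in> F}, so N^s(F) < r implies N^s(S) < K^s |C_w|^s r.
   4. Frequencies: shifting the orbit by n steps changes every count tau by at most n, so
      once N - m \<ge> 2n/eps, h maps C_w \<inter> G(N, eps/2) into G(N, eps).
   The theorem follows with r = c / K^s and K_C = m + \<lceil>2|w|/eps\<rceil>, using M_k \<ge> k. *)


section \<open>Cylinders\<close>

lemma fexp_settingD:
  assumes "fexp_setting f g a b"
  shows "f ` {0..<1} \<subseteq> {0..<1}"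
    and "\<And>i. i < g \<Longrightarrow> {a i..<b i} \<subseteq> {0..<1}"
    and "\<And>i. i < g \<Longrightarrow> mono_on {a i..<b i} f \<or> antimono_on {a i..<b i} f"
    and "\<And>i. i < g \<Longrightarrow> f ` {a i..<b i} = {0..<1}"
    and "\<And>i x y. i < g \<Longrightarrow> x \<in> {a i..<b i} \<Longrightarrow> y \<in> {a i..<b i} \<Longrightarrow> \<bar>x - y\<bar> \<le> \<bar>f x - f y\<bar>"
  using assms unfolding fexp_setting_def by blast+

lemma funpow_maps_unit:
  fixes f :: "real \<Rightarrow> real"
  assumes "f ` {0..<1} \<subseteq> {0..<1}" "x \<in> {0..<1}"
  shows "(f ^^ n) x \<in> {0..<1}"
  using assms by (induction n) (auto simp: image_subset_iff)

lemma cyl_subset_unit: "cyl f a b w \<subseteq> {0..<1}"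
  unfolding cyl_def by auto

lemma cyl_append:
  assumes "f ` {0..<1} \<subseteq> {0..<1::real}"
  shows "cyl f a b (w @ v) = {x \<in> cyl f a b w. (f ^^ length w) x \<in> cyl f a b v}"
proof -
  have split_range: "(\<forall>i<length w + length v. P i) \<longleftrightarrow>
      (\<forall>i<length w. P i) \<and> (\<forall>j<length v. P (j + length w))" for P :: "nat \<Rightarrow> bool"
    by (smt (verit, best) add.commute add_diff_inverse_nat add_less_cancel_left trans_less_add1)
  have "x \<in> cyl f a b (w @ v) \<longleftrightarrow> x \<in> cyl f a b w \<and> (f ^^ length w) x \<in> cyl f a b v" for x
    using funpow_maps_unit[OF assms, of x "length w"]
    unfolding cyl_def length_append split_range by (auto simp: nth_append funpow_add)
  then show ?thesis by blast
qed

lemma cyl_Cons: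
  assumes "fexp_setting f g a b" "i < g"
  shows "cyl f a b (i # v) = {x \<in> {a i..<b i}. f x \<in> cyl f a b v}"
proof -
  have "cyl f a b [i] = {a i..<b i}"
    using fexp_settingD(2)[OF assms] unfolding cyl_def by auto
  then show ?thesis
    using cyl_append[OF fexp_settingD(1)[OF assms(1)], of a b "[i]" v] by simp
qed

lemma cyl_onto:
  assumes "fexp_setting f g a b" "word g w"
  shows "(f ^^ length w) ` cyl f a b w = {0..<1}"
  using assms(2)
proof (induction w)
  case Nil
  then show ?case by (auto simp: cyl_def)
next
  case (Cons i v)
  have i: "i < g" and v: "word g v" using Cons.prems by (auto simp: word_def)
  have "(f ^^ length (i # v)) ` cyl f a b (i # v) = (f ^^ length v) ` (f ` cyl f a b (i # v))"
    by (simp del: funpow.simps add: funpow_Suc_right image_image)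
  also have "f ` cyl f a b (i # v) = cyl f a b v"
  proof
    show "f ` cyl f a b (i # v) \<subseteq> cyl f a b v" using cyl_Cons[OF assms(1) i] by auto
    show "cyl f a b v \<subseteq> f ` cyl f a b (i # v)"
    proof
      fix y assume y: "y \<in> cyl f a b v"
      then have "y \<in> f ` {a i..<b i}" using fexp_settingD(4)[OF assms(1) i] cyl_subset_unit by blast
      then show "y \<in> f ` cyl f a b (i # v)" using cyl_Cons[OF assms(1) i] y by auto
    qed
  qed
  finally show ?case using Cons.IH[OF v] by simp
qed

text \<open>Cylinders are intervals (order-convex), because each branch of f is monotone.\<close>
lemma cyl_convex:
  assumes "fexp_setting f g a b" "word g w" "x \<in> cyl f a b w" "y \<in> cyl f a b w" "x \<le> z" "z \<le> y"
  shows "z \<in> cyl f a b w"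
  using assms(2-6)
proof (induction w arbitrary: x y z)
  case Nil
  then show ?case by (auto simp: cyl_def)
next
  case (Cons i v)
  have i: "i < g" and v: "word g v" using Cons.prems(1) by (auto simp: word_def)
  have x: "x \<in> {a i..<b i}" "f x \<in> cyl f a b v" using Cons.prems(2) cyl_Cons[OF assms(1) i] by blast+
  have y: "y \<in> {a i..<b i}" "f y \<in> cyl f a b v" using Cons.prems(3) cyl_Cons[OF assms(1) i] by blast+
  have z: "z \<in> {a i..<b i}" using x(1) y(1) Cons.prems(4,5) by auto
  from fexp_settingD(3)[OF assms(1) i] have "f z \<in> cyl f a b v"
  proof
    assume "mono_on {a i..<b i} f"
    then have "f x \<le> f z" "f z \<le> f y" using x(1) y(1) z Cons.prems(4,5) by (auto intro: mono_onD)
    then show ?thesis using Cons.IH[OF v x(2) y(2)] by blast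
  next
    assume "antimono_on {a i..<b i} f"
    then have "f y \<le> f z" "f z \<le> f x" using x(1) y(1) z Cons.prems(4,5) by (auto simp: monotone_on_def)
    then show ?thesis using Cons.IH[OF v y(2) x(2)] by blast
  qed
  then show ?case using z cyl_Cons[OF assms(1) i] by blast
qed

text \<open>f^|w| does not contract distances on C_w (composition of non-contracting branches).\<close>
lemma cyl_expanding:
  assumes "fexp_setting f g a b" "word g w" "x \<in> cyl f a b w" "y \<in> cyl f a b w"
  shows "\<bar>x - y\<bar> \<le> \<bar>(f ^^ length w) x - (f ^^ length w) y\<bar>"
  using assms(2-4)
proof (induction w arbitrary: x y)
  case Nil
  then show ?case by simp
next
  case (Cons i v)
  have i: "i < g" and v: "word g v" using Cons.prems(1) by (auto simp: word_def)
  have x: "x \<in> {a i..<b i}" "f x \<in> cyl f a b v" using Cons.prems(2) cyl_Cons[OF assms(1) i] by blast+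
  have y: "y \<in> {a i..<b i}" "f y \<in> cyl f a b v" using Cons.prems(3) cyl_Cons[OF assms(1) i] by blast+
  have "\<bar>x - y\<bar> \<le> \<bar>f x - f y\<bar>" using fexp_settingD(5)[OF assms(1) i x(1) y(1)] .
  also have "\<dots> \<le> \<bar>(f ^^ length v) (f x) - (f ^^ length v) (f y)\<bar>" using Cons.IH[OF v x(2) y(2)] .
  finally show ?case by (simp del: funpow.simps add: funpow_Suc_right)
qed


section \<open>Lengths of cylinders\<close>

lemma cyl_bounded: "bounded (cyl f a b w)"
  using bounded_subset[OF bounded_Ico cyl_subset_unit] .

lemma cyl_dist_le: "x \<in> cyl f a b w \<Longrightarrow> y \<in> cyl f a b w \<Longrightarrow> \<bar>x - y\<bar> \<le> clen (cyl f a b w)"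
  using diameter_bounded_bound[OF cyl_bounded] unfolding clen_def dist_real_def by blast

lemma clen_nonneg: "0 \<le> clen (cyl f a b w)"
  unfolding clen_def using diameter_ge_0[OF cyl_bounded] .

text \<open>Cylinders of words are nondegenerate: C_w contains preimages of 0 and 1/2.\<close>
lemma clen_pos:
  assumes "fexp_setting f g a b" "word g w"
  shows "0 < clen (cyl f a b w)"
proof -
  have onto: "(f ^^ length w) ` cyl f a b w = {0..<1}" using cyl_onto[OF assms] .
  obtain x0 where x0: "x0 \<in> cyl f a b w" "(f ^^ length w) x0 = 0"
    using onto by (metis atLeastLessThan_iff imageE order_refl zero_less_one)
  obtain x1 where x1: "x1 \<in> cyl f a b w" "(f ^^ length w) x1 = 1/2"
    using onto by (metis atLeastLessThan_iff imageE field_sum_of_halves half_gt_zero_iff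
        less_add_same_cancel1 less_eq_real_def zero_less_one)
  have "0 < \<bar>x0 - x1\<bar>" using x0 x1 by auto
  also have "\<dots> \<le> clen (cyl f a b w)" using cyl_dist_le[OF x0(1) x1(1)] .
  finally show ?thesis .
qed


section \<open>Bounded distortion\<close>

lemma mvt_within:
  fixes h D :: "real \<Rightarrow> real"
  assumes "x < y" "{x..y} \<subseteq> S"
    and "\<forall>t\<in>S. (h has_real_derivative D t) (at t within S)"
  shows "\<exists>z\<in>{x<..<y}. h y - h x = (y - x) * D z"
proof -
  have "(h has_real_derivative D t) (at t within {x..y})" if "x \<le> t" "t \<le> y" for t
  proof (rule has_field_derivative_subset)
    show "(h has_real_derivative D t) (at t within S)" using assms(2,3) that by auto
  qed (use assms(2) in simp)
  then have "(h has_derivative (\<lambda>u. D t * u)) (at t within {x..y})" if "x \<le> t" "t \<le> y" for t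
    using that by (simp add: has_field_derivative_def)
  from mvt_simple[OF assms(1) this] show ?thesis by (simp add: mult.commute)
qed

lemma cyl_mvt:
  assumes "fexp_setting f g a b" "word g w"
    and D: "\<forall>t\<in>cyl f a b w. ((f ^^ length w) has_real_derivative D t) (at t within cyl f a b w)"
    and "x \<in> cyl f a b w" "y \<in> cyl f a b w"
  shows "\<exists>\<eta>\<in>cyl f a b w. \<bar>(f ^^ length w) y - (f ^^ length w) x\<bar> = \<bar>y - x\<bar> * \<bar>D \<eta>\<bar>"
proof -
  let ?C = "cyl f a b w" and ?h = "f ^^ length w"
  have ordered: "\<exists>\<eta>\<in>?C. \<bar>?h v - ?h u\<bar> = \<bar>v - u\<bar> * \<bar>D \<eta>\<bar>" if "u \<in> ?C" "v \<in> ?C" "u < v" for u v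
  proof -
    have "{u..v} \<subseteq> ?C" using cyl_convex[OF assms(1,2) that(1,2)] by auto
    with mvt_within[OF \<open>u < v\<close> _ D] obtain z where "z \<in> {u<..<v}" "?h v - ?h u = (v - u) * D z"
      by blast
    with \<open>{u..v} \<subseteq> ?C\<close> show ?thesis by (intro bexI[of _ z]) (auto simp: abs_mult)
  qed
  consider "x < y" | "x = y" | "y < x" by linarith
  then show ?thesis
  proof cases
    case 3
    then show ?thesis using ordered[OF assms(5,4)] by (simp add: abs_minus_commute)
  qed (use assms ordered in auto)
qed

text \<open>Since f^|w| maps C_w onto [0,1), its derivative cannot be small compared to 1/|C_w|
  anywhere on C_w: the distortion bound transports the average slope to every point.\<close>
lemma derivative_lower_bound:
  assumes set: "fexp_setting f g a b" and w: "word g w"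
    and D: "\<forall>t\<in>cyl f a b w. ((f ^^ length w) has_real_derivative D t) (at t within cyl f a b w)"
    and ratio: "\<forall>y\<in>cyl f a b w. \<forall>z\<in>cyl f a b w. \<bar>D y\<bar> / \<bar>D z\<bar> < K"
    and \<xi>: "\<xi> \<in> cyl f a b w" "D \<xi> \<noteq> 0"
  shows "1 \<le> K * clen (cyl f a b w) * \<bar>D \<xi>\<bar>"
proof (rule field_le_mult_one_interval)
  let ?C = "cyl f a b w" and ?h = "f ^^ length w"
  fix t :: real assume t: "0 < t" "t < 1"
  have onto: "?h ` ?C = {0..<1}" using cyl_onto[OF set w] .
  obtain x where x: "x \<in> ?C" "?h x = 0" using onto by (metis atLeastLessThan_iff imageE order_refl zero_less_one)
  obtain y where y: "y \<in> ?C" "?h y = t" using onto t by (metis atLeastLessThan_iff imageE less_le)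
  obtain \<eta> where \<eta>: "\<eta> \<in> ?C" "\<bar>?h y - ?h x\<bar> = \<bar>y - x\<bar> * \<bar>D \<eta>\<bar>"
    using cyl_mvt[OF set w D x(1) y(1)] by blast
  have "\<bar>D \<eta>\<bar> < K * \<bar>D \<xi>\<bar>" using ratio \<eta>(1) \<xi> by (metis divide_less_eq zero_less_abs_iff)
  have "t * 1 = \<bar>y - x\<bar> * \<bar>D \<eta>\<bar>" using \<eta>(2) x y t by simp
  also have "\<dots> \<le> clen ?C * (K * \<bar>D \<xi>\<bar>)"
    using cyl_dist_le[OF y(1) x(1)] \<open>\<bar>D \<eta>\<bar> < K * \<bar>D \<xi>\<bar>\<close> clen_nonneg by (intro mult_mono) auto
  finally show "t * 1 \<le> K * clen ?C * \<bar>D \<xi>\<bar>" by (simp add: algebra_simps)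
qed

lemma clen_append:
  assumes set: "fexp_setting f g a b" and K: "bounded_distortion f g a b K" and w: "word g w"
  shows "clen (cyl f a b (w @ v)) \<le> K * clen (cyl f a b w) * clen (cyl f a b v)"
proof -
  let ?C = "cyl f a b w" and ?h = "f ^^ length w"
  let ?B = "K * clen ?C * clen (cyl f a b v)"
  obtain D where D: "\<forall>t\<in>?C. (?h has_real_derivative D t) (at t within ?C)"
    and ratio: "\<forall>y\<in>?C. \<forall>z\<in>?C. \<bar>D y\<bar> / \<bar>D z\<bar> < K"
    using K w unfolding bounded_distortion_def by blast
  have B_nonneg: "0 \<le> ?B" using K clen_nonneg unfolding bounded_distortion_def by simp
  have "\<bar>x - y\<bar> \<le> ?B" if "x \<in> cyl f a b (w @ v)" "y \<in> cyl f a b (w @ v)" for x y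
  proof (cases "x = y")
    case False
    have x: "x \<in> ?C" "?h x \<in> cyl f a b v" and y: "y \<in> ?C" "?h y \<in> cyl f a b v"
      using that cyl_append[OF fexp_settingD(1)[OF set]] by auto
    obtain \<xi> where \<xi>: "\<xi> \<in> ?C" "\<bar>?h y - ?h x\<bar> = \<bar>y - x\<bar> * \<bar>D \<xi>\<bar>"
      using cyl_mvt[OF set w D x(1) y(1)] by blast
    have "D \<xi> \<noteq> 0" using cyl_expanding[OF set w y(1) x(1)] \<xi>(2) False by auto
    have "\<bar>x - y\<bar> \<le> \<bar>y - x\<bar> * (K * clen ?C * \<bar>D \<xi>\<bar>)"
      using derivative_lower_bound[OF set w D ratio \<xi>(1) \<open>D \<xi> \<noteq> 0\<close>]
      by (simp add: abs_minus_commute mult_le_cancel_left1)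
    also have "\<dots> = K * clen ?C * \<bar>?h y - ?h x\<bar>" using \<xi>(2) by (simp add: algebra_simps)
    also have "\<dots> \<le> ?B"
      using cyl_dist_le[OF y(2) x(2)] K clen_nonneg unfolding bounded_distortion_def
      by (intro mult_left_mono) auto
    finally show ?thesis .
  qed (use B_nonneg in simp)
  then have "diameter (cyl f a b (w @ v)) \<le> ?B"
    using B_nonneg by (intro diameter_le) auto
  then show ?thesis by (simp add: clen_def)
qed


section \<open>Pulling back cylinder covers\<close>

text \<open>A finite constant factor can be pulled out of an infinite sum in ennreal; the library
  version needs continuous multiplication, which fails at 0 * \<infinity>.\<close>
lemma infsum_cmult_ennreal:
  fixes h :: "'a \<Rightarrow> ennreal"
  assumes "c < top"
  shows "infsum (\<lambda>x. c * h x) A = c * infsum h A"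
proof -
  have "(h has_sum infsum h A) A"
    by (rule has_sum_infsum) (rule nonneg_summable_on_complete; simp)
  then have "((\<lambda>F. c * sum h F) \<longlongrightarrow> c * infsum h A) (finite_subsets_at_top A)"
    unfolding has_sum_def by (rule ennreal_tendsto_cmult[OF assms])
  then have "((\<lambda>x. c * h x) has_sum (c * infsum h A)) A"
    unfolding has_sum_def by (simp add: sum_distrib_left)
  then show ?thesis by (rule infsumI)
qed

text \<open>Covers of F transport to covers of the points of C_w mapped into F by f^|w|, by prefixing w; by
  quasi-multiplicativity the s-dimensional cost grows by at most the factor K^s |C_w|^s.\<close>
lemma Ninf_pullback:
  assumes set: "fexp_setting f g a b" and K: "bounded_distortion f g a b K" and w: "word g w"
    and s: "0 < s"
    and F: "Ninf f g a b s F < ennreal r"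
    and S: "S \<subseteq> {x \<in> cyl f a b w. (f ^^ length w) x \<in> F}"
  shows "Ninf f g a b s S < ennreal (K powr s * clen (cyl f a b w) powr s * r)"
proof -
  let ?cost = "\<lambda>u. ennreal (clen (cyl f a b u) powr s)"
  let ?factor = "K powr s * clen (cyl f a b w) powr s"
  have factor_pos: "0 < ?factor"
    using K clen_pos[OF set w] unfolding bounded_distortion_def by simp
  obtain W where W: "\<forall>v\<in>W. word g v" "F \<subseteq> (\<Union>v\<in>W. cyl f a b v)"
    and W_cost: "infsum ?cost W < ennreal r"
    using F unfolding Ninf_def INF_less_iff by blast
  have "S \<subseteq> (\<Union>v\<in>W. cyl f a b (w @ v))"
    using S W(2) cyl_append[OF fexp_settingD(1)[OF set]] by fastforce
  moreover have "\<forall>u\<in>(\<lambda>v. w @ v) ` W. word g u" using W(1) w by (auto simp: word_def)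
  ultimately have "Ninf f g a b s S \<le> infsum ?cost ((\<lambda>v. w @ v) ` W)"
    unfolding Ninf_def by (intro INF_lower) auto
  also have "\<dots> = infsum (\<lambda>v. ?cost (w @ v)) W"
    by (subst infsum_reindex) (auto simp: inj_on_def comp_def)
  also have "\<dots> \<le> infsum (\<lambda>v. ennreal ?factor * ?cost v) W"
  proof (rule infsum_mono)
    fix v assume "v \<in> W"
    have "clen (cyl f a b (w @ v)) powr s \<le> (K * clen (cyl f a b w) * clen (cyl f a b v)) powr s"
      using clen_append[OF set K w] clen_nonneg s by (intro powr_mono2) auto
    also have "\<dots> = ?factor * clen (cyl f a b v) powr s"
      by (simp add: powr_mult)
    finally show "?cost (w @ v) \<le> ennreal ?factor * ?cost v"
      by (simp add: ennreal_mult[symmetric])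
  qed (rule nonneg_summable_on_complete; simp)+
  also have "\<dots> = ennreal ?factor * infsum ?cost W"
    by (rule infsum_cmult_ennreal) simp
  also have "\<dots> < ennreal ?factor * ennreal r"
    using factor_pos by (intro ennreal_mult_strict_left_mono W_cost) auto
  also have "\<dots> = ennreal (?factor * r)"
    using factor_pos by (simp add: ennreal_mult')
  finally show ?thesis .
qed


section \<open>Frequencies along shifted orbits\<close>

lemma card_shift_le:
  fixes P :: "nat \<Rightarrow> bool"
  shows "card {i. i < L \<and> P (i + n)} \<le> card {i. i < L \<and> P i} + n"
    and "card {i. i < L \<and> P i} \<le> card {i. i < L \<and> P (i + n)} + n"
proof -
  let ?A = "{i. i < L \<and> P (i + n)}" and ?B = "{i. i < L \<and> P i}"
  have card_image_A: "card ((\<lambda>i. i + n) ` ?A) = card ?A" by (rule card_image) (auto simp: inj_on_def)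
  have "(\<lambda>i. i + n) ` ?A \<subseteq> ?B \<union> {L..<L+n}" by auto
  then have "card ((\<lambda>i. i + n) ` ?A) \<le> card (?B \<union> {L..<L+n})" by (intro card_mono) auto
  also have "\<dots> \<le> card ?B + card {L..<L+n}" by (rule card_Un_le)
  finally show "card ?A \<le> card ?B + n" using card_image_A by simp
  have "?B \<subseteq> (\<lambda>i. i + n) ` ?A \<union> {..<n}"
  proof
    fix j assume j: "j \<in> ?B"
    show "j \<in> (\<lambda>i. i + n) ` ?A \<union> {..<n}"
    proof (cases "j < n")
      case False
      then have "j = (j - n) + n" "j - n \<in> ?A" using j by auto
      then show ?thesis by blast
    qed simp
  qed
  then have "card ?B \<le> card ((\<lambda>i. i + n) ` ?A \<union> {..<n})" by (intro card_mono) auto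
  also have "\<dots> \<le> card ((\<lambda>i. i + n) ` ?A) + card {..<n}" by (rule card_Un_le)
  finally show "card ?B \<le> card ?A + n" using card_image_A by simp
qed

text \<open>The digits of f^n(x) are those of x shifted by n, so each count tau moves by at most n.\<close>
lemma tau_shift:
  "\<bar>real (tau f g a b u ((f ^^ n) x) N) - real (tau f g a b u x N)\<bar> \<le> real n"
proof -
  define P where "P j \<longleftrightarrow> map (\<lambda>k. digit f g a b x (j + k)) [0..<length u] = u" for j
  have digit_shift: "digit f g a b ((f ^^ n) x) j = digit f g a b x (j + n)" for j
    unfolding digit_def by (simp add: funpow_add)
  have "tau f g a b u x N = card {i. i < N - length u \<and> P i}"
    unfolding tau_def P_def by simp
  moreover have "tau f g a b u ((f ^^ n) x) N = card {i. i < N - length u \<and> P (i + n)}"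
    unfolding tau_def P_def digit_shift by (simp add: algebra_simps)
  ultimately show ?thesis using card_shift_le[of "N - length u" P n] by linarith
qed

lemma Gset_shift:
  assumes set: "fexp_setting f g a b"
    and x: "x \<in> Gset f g a b m p N (eps / 2)"
    and N: "m < N" and n: "real n \<le> eps / 2 * real (N - m)"
  shows "(f ^^ n) x \<in> Gset f g a b m p N eps"
proof -
  have x01: "x \<in> {0..<1}" using x unfolding Gset_def by auto
  have len_pos: "0 < real (N - m)" using N by simp
  have "p u - eps < real (tau f g a b u ((f ^^ n) x) N) / real (N - m) \<and>
        real (tau f g a b u ((f ^^ n) x) N) / real (N - m) < p u + eps"
    if u: "word g u" "length u = m" for u
  proof -
    define new where "new = real (tau f g a b u ((f ^^ n) x) N) / real (N - m)"
    define old where "old = real (tau f g a b u x N) / real (N - m)"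
    have old: "p u - eps / 2 < old" "old < p u + eps / 2"
      using x u unfolding Gset_def old_def by auto
    have "\<bar>new - old\<bar> = \<bar>real (tau f g a b u ((f ^^ n) x) N) - real (tau f g a b u x N)\<bar> / real (N - m)"
      unfolding new_def old_def using len_pos by (simp add: diff_divide_distrib[symmetric])
    also have "\<dots> \<le> real n / real (N - m)" using tau_shift len_pos by (simp add: divide_right_mono)
    also have "\<dots> \<le> eps / 2" using n len_pos by (simp add: divide_le_eq)
    finally have close: "\<bar>new - old\<bar> \<le> eps / 2" .
    have "p u - eps < new \<and> new < p u + eps"
      using old abs_le_D1[OF close] abs_le_D2[OF close] by (intro conjI) linarith+
    then show ?thesis unfolding new_def .
  qed
  then show ?thesis
    using funpow_maps_unit[OF fexp_settingD(1)[OF set] x01] unfolding Gset_def by auto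
qed


section \<open>The localisation theorem\<close>

lemma cylinder_estimate:
  assumes set: "fexp_setting f g a b" and K: "bounded_distortion f g a b K"
    and w: "word g w" and s: "0 < s"
    and hyp: "Ninf f g a b s ({0..<1} \<inter> Gset f g a b m p N eps) < ennreal (c / K powr s)"
    and N: "m < N" and long: "real (length w) \<le> eps / 2 * real (N - m)"
  shows "Ninf f g a b s (cyl f a b w \<inter> Gset f g a b m p N (eps / 2))
           < ennreal (c * clen (cyl f a b w) powr s)"
proof -
  have "cyl f a b w \<inter> Gset f g a b m p N (eps / 2) \<subseteq>
        {x \<in> cyl f a b w. (f ^^ length w) x \<in> {0..<1} \<inter> Gset f g a b m p N eps}"
    using Gset_shift[OF set _ N long] Gset_def by auto
  from Ninf_pullback[OF set K w s hyp this]
  show ?thesis using K unfolding bounded_distortion_def by (simp add: mult.commute)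
qed

lemma long_window:
  fixes eps :: real and n m k N :: nat
  assumes eps: "0 < eps" and k: "m + nat \<lceil>2 * real n / eps\<rceil> < k" and kN: "k \<le> N"
  shows "m < N" "real n \<le> eps / 2 * real (N - m)"
proof -
  show "m < N" using k kN by linarith
  have "2 * real n / eps \<le> real (N - m)"
    using k kN real_nat_ceiling_ge[of "2 * real n / eps"] by linarith
  then show "real n \<le> eps / 2 * real (N - m)" using eps by (simp add: field_simps)
qed

theorem mainTheorem9:
  fixes f :: "real \<Rightarrow> real" and g :: nat and a b :: "nat \<Rightarrow> real" and K :: real
    and m :: nat and p :: "nat list \<Rightarrow> real" and eps s c :: real and M :: "nat \<Rightarrow> nat"
  assumes setting: "fexp_setting f g a b"
    and cond_i: "bounded_distortion f g a b K"
    and m_pos: "m \<ge> 1"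
    and p_range: "\<forall>w. word g w \<and> length w = m \<longrightarrow> 0 \<le> p w \<and> p w \<le> 1"
    and eps_pos: "eps > 0"
    and s_range: "0 < s" "s \<le> 1"
    and M_mono: "strict_mono M"
    and c_range: "0 \<le> c" "c < 1"
    and hyp: "\<forall>k. Ninf f g a b s ({0..<1} \<inter> Gset f g a b m p (M k) eps) < ennreal (c / K powr s)"
  shows "\<forall>w. word g w \<longrightarrow> (\<exists>KC. \<forall>k>KC.
           Ninf f g a b s (cyl f a b w \<inter> Gset f g a b m p (M k) (eps / 2))
             < ennreal (c * clen (cyl f a b w) powr s))"
proof (intro allI impI)
  fix w assume w: "word g w"
  let ?KC = "m + nat \<lceil>2 * real (length w) / eps\<rceil>"
  have "Ninf f g a b s (cyl f a b w \<inter> Gset f g a b m p (M k) (eps / 2))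
          < ennreal (c * clen (cyl f a b w) powr s)" if "?KC < k" for k
    using cylinder_estimate[OF setting cond_i w s_range(1) hyp[rule_format]]
      long_window[OF eps_pos that seq_suble[OF M_mono]] by blast
  then show "\<exists>KC. \<forall>k>KC. Ninf f g a b s (cyl f a b w \<inter> Gset f g a b m p (M k) (eps / 2))
               < ennreal (c * clen (cyl f a b w) powr s)" by blast
qed

end
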